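(* Let $0<\kappa_p<\kappa_s$ and $0<R'<R$. Then for all sufficiently large $n$ and $j=1,2$, \[ \Big|\frac{h_n^{(j)}(\kappa_pR)}{h_n^{(j)}(\kappa_pR')}-\frac{h_n^{(j)}(\kappa_sR)}{h_n^{(j)}(\kappa_sR')}\Big|\le\frac{14}{3}\,\frac{\kappa_s(\kappa_s-\kappa_p)}{n}\,R(R-R')\Big(\frac{R'}{R}\Big)^{n+1}. \]
   Context: $h_n^{(1)}$ and $h_n^{(2)}$ denote the spherical Hankel functions of the first and second kind of order $n$ (for real arguments $h_n^{(2)}=\overline{h_n^{(1)}}$). *)

theory Defs
  imports Complex_Main
begin

text \<open>Spherical Hankel functions of the first and second kind of integer order n,
  for real argument x > 0, via the standard closed form (DLMF 10.49.6):
  h_n^(1)(x) = (-i)^(n+1) e^(ix)/x * sum_(k=0..n) i^k (n+k)! / (k! (n-k)! (2x)^k),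
  and h_n^(2)(x) = conj(h_n^(1)(x)) for real x.\<close>

definition sph_hankel1 :: "nat \<Rightarrow> real \<Rightarrow> complex" where
  "sph_hankel1 n x =
     (- \<i>) ^ (n + 1) * exp (\<i> * complex_of_real x) / complex_of_real x *
     (\<Sum>k=0..n. \<i> ^ k * of_nat (fact (n + k)) /
        (of_nat (fact k * fact (n - k)) * (2 * complex_of_real x) ^ k))"

definition sph_hankel2 :: "nat \<Rightarrow> real \<Rightarrow> complex" where
  "sph_hankel2 n x = cnj (sph_hankel1 n x)"

definition sph_hankel :: "nat \<Rightarrow> nat \<Rightarrow> real \<Rightarrow> complex" where
  "sph_hankel j n x = (if j = 1 then sph_hankel1 n x else sph_hankel2 n x)"

end

theory Submission
  imports Defs "HOL-Analysis.Analysis" "HOL-Real_Asymp.Real_Asymp"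
begin

text \<open>Reversing the order of summation in the closed form of the first kind gives
  h(n,x) = -i (2n)! / (n! 2^n) * e^(ix) P(n,x) / x^(n+1), where
  P(n,x) = sum over m <= n of w(n,m) (-2ix)^m / m! and w(n,m) = (2n-m)! n! / ((n-m)! (2n)!).
  The weights satisfy w(n,m) -> 2^(-m) and n (w(n,m) - 2^(-m)) -> -m(m-1) / 2^(m+2), with the error
  dominated by m^2 / 2^m; Tannery's theorem then gives n (e^(ix) P(n,x) - 1) -> x^2/4.
  Hence h(n,a) / h(n,b) = (b/a)^(n+1) (1 + (a^2 - b^2)/(4n) + o(1/n)), and the difference of the two
  quotients is (R'/R)^(n+1) (l/n + o(1/n)) with |l| = (ks^2 - kp^2)(R^2 - R'^2)/4 < ks (ks - kp) R (R - R').
  The second kind is the complex conjugate of the first, which does not change the norm.\<close>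

definition hankel_weight :: "nat \<Rightarrow> nat \<Rightarrow> real" where
  "hankel_weight n m =
     (if m \<le> n then fact (2*n - m) * fact n / (fact (n - m) * fact (2*n)) else 0)"

lemma hankel_weight_0 [simp]: "hankel_weight n 0 = 1"
  by (simp add: hankel_weight_def)

lemma hankel_weight_Suc:
  assumes "m < n"
  shows "hankel_weight n (Suc m) = hankel_weight n m * (real n - real m) / (2 * real n - real m)"
proof -
  have F1: "fact (2*n - m) = (2 * real n - real m) * (fact (2*n - Suc m) :: real)"
    using assms fact_reduce[of "2*n - m", where 'a=real] by (simp add: of_nat_diff)
  have F2: "fact (n - m) = (real n - real m) * (fact (n - Suc m) :: real)"
    using assms fact_reduce[of "n - m", where 'a=real] by (simp add: of_nat_diff)
  have "hankel_weight n m = (2 * real n - real m) / (real n - real m) * hankel_weight n (Suc m)"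
    using assms by (simp add: hankel_weight_def F1 F2)
  moreover have "2 * real n - real m \<noteq> 0" "real n - real m \<noteq> 0"
    using assms by auto
  ultimately show ?thesis
    by (simp add: field_simps)
qed

lemma hankel_weight_bounds:
  assumes "m \<le> n"
  shows "0 \<le> hankel_weight n m \<and> hankel_weight n m \<le> 1 / 2^m \<and>
         real n * (1 / 2^m - hankel_weight n m) \<le> real m ^ 2 / 2^m"
  using assms
proof (induction m)
  case 0
  then show ?case by simp
next
  case (Suc m)
  then have mn: "m < n" by simp
  define N where "N = real n"
  define M where "M = real m"
  define a where "a = hankel_weight n m"
  define p :: real where "p = 1 / 2^m"
  define r where "r = (N - M) / (2*N - M)"
  have MN: "M < N" "0 \<le> M" and p: "0 < p"
    using mn by (auto simp: N_def M_def p_def)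
  have IH: "0 \<le> a" "a \<le> p" "N * (p - a) \<le> M^2 * p"
    using Suc mn by (auto simp: a_def p_def N_def M_def)
  have r: "0 \<le> r" "r \<le> 1/2" "N * (1/2 - r) \<le> M/2"
    using MN by (auto simp: r_def field_simps mult_left_mono)
  have step: "hankel_weight n (Suc m) = a * r"
    using hankel_weight_Suc[OF mn] by (simp add: a_def r_def N_def M_def)
  have "a * r \<le> p * (1/2)"
    using IH r by (intro mult_mono) auto
  moreover have "N * (p/2 - a*r) \<le> (M+1)^2 * (p/2)"
  proof -
    have "N * (p/2 - a*r) = N * (p - a) * r + p * (N * (1/2 - r))"
      by (simp add: algebra_simps)
    also have "\<dots> \<le> M^2 * p * (1/2) + p * (M/2)"
    proof (rule add_mono)
      show "N * (p - a) * r \<le> M^2 * p * (1/2)"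
        using IH(3) r(1,2) mult_mono[of "N * (p - a)" "M^2 * p" r "1/2"] MN p by simp
      show "p * (N * (1/2 - r)) \<le> p * (M/2)"
        using r(3) p by (intro mult_left_mono) auto
    qed
    also have "\<dots> \<le> (M+1)^2 * (p/2)"
      using p MN by (simp add: power2_eq_square field_simps)
    finally show ?thesis .
  qed
  moreover have half: "(1::real) / 2^Suc m = p/2" and square: "real (Suc m)^2 / 2^Suc m = (M+1)^2 * (p/2)"
    by (simp_all add: p_def M_def add.commute)
  ultimately show ?case
    unfolding step half square N_def[symmetric] using IH r by simp
qed

lemma hankel_weight_error_bound:
  "\<bar>real n * (hankel_weight n m - 1 / 2^m)\<bar> \<le> real m ^ 2 / 2^m"
proof (cases "m \<le> n")
  case True
  note bounds = hankel_weight_bounds[OF True]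
  then have "real n * hankel_weight n m \<le> real n * (1 / 2^m)"
    by (intro mult_left_mono) auto
  with bounds show ?thesis
    by (simp add: abs_if algebra_simps)
next
  case False
  then have "n \<le> m * m"
    using le_square[of m] by linarith
  then have "real n \<le> real m ^ 2"
    by (simp add: power2_eq_square flip: of_nat_mult)
  with False show ?thesis
    by (simp add: hankel_weight_def divide_right_mono)
qed

lemma hankel_weight_asymp:
  "(\<lambda>n. real n * (hankel_weight n m - 1 / 2^m)) \<longlonglongrightarrow> - (real m * (real m - 1) / (4 * 2^m))"
proof (induction m)
  case 0
  then show ?case by simp
next
  case (Suc m)
  define r where "r n = (real n - real m) / (2 * real n - real m)" for n
  have "r \<longlonglongrightarrow> 1/2" and "(\<lambda>n. real n * (r n - 1/2)) \<longlonglongrightarrow> - real m / 4"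
    unfolding r_def by real_asymp+
  then have "(\<lambda>n. real n * (hankel_weight n m - 1/2^m) * r n + (1/2^m) * (real n * (r n - 1/2)))
      \<longlonglongrightarrow> - (real m * (real m - 1) / (4 * 2^m)) * (1/2) + (1/2^m) * (- real m / 4)"
    by (intro tendsto_intros Suc)
  also have "- (real m * (real m - 1) / (4 * 2^m)) * (1/2) + (1/2^m) * (- real m / 4)
      = - (real (Suc m) * (real (Suc m) - 1) / (4 * 2^Suc m))"
    by (simp add: field_simps)
  finally show ?case
  proof (rule Lim_transform_eventually)
    show "\<forall>\<^sub>F n in sequentially.
        real n * (hankel_weight n m - 1/2^m) * r n + (1/2^m) * (real n * (r n - 1/2))
        = real n * (hankel_weight n (Suc m) - 1/2^Suc m)"
      using eventually_gt_at_top[of m]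
    proof eventually_elim
      case (elim n)
      then have "hankel_weight n (Suc m) = hankel_weight n m * r n"
        by (simp add: hankel_weight_Suc r_def)
      then show ?case
        by (simp add: algebra_simps)
    qed
  qed
qed

lemma square_le_four_pow: "real m ^ 2 \<le> 4 ^ m"
proof -
  have "real m \<le> 2 ^ m"
    by (metis less_exp less_imp_le of_nat_le_iff of_nat_numeral of_nat_power)
  then have "real m ^ 2 \<le> (2 ^ m) ^ 2"
    by (intro power_mono) auto
  also have "\<dots> = 4 ^ m"
    by (simp add: power2_eq_square flip: power_mult_distrib)
  finally show ?thesis .
qed

lemma sums_pred_mult_exp:
  fixes z :: complex
  shows "(\<lambda>m. of_nat m * (of_nat m - 1) * z ^ m / fact m) sums (z^2 * exp z)"
proof -
  let ?f = "\<lambda>m. of_nat m * (of_nat m - 1) * z ^ m / (fact m :: complex)"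
  have "?f (Suc (Suc m)) = z^2 * (z ^ m /\<^sub>R fact m)" for m
  proof -
    define k :: complex where "k = of_nat (Suc (Suc m)) * of_nat (Suc m)"
    have "k \<noteq> 0"
      by (simp add: k_def del: of_nat_Suc)
    have "fact (Suc (Suc m)) = k * fact m"
      by (simp add: k_def algebra_simps)
    then have "?f (Suc (Suc m)) = k * (z^2 * z^m) / (k * fact m)"
      by (simp add: k_def algebra_simps power2_eq_square)
    also have "\<dots> = z^2 * z^m / fact m"
      using \<open>k \<noteq> 0\<close> by (rule mult_divide_mult_cancel_left)
    finally show ?thesis
      by (simp add: scaleR_conv_of_real divide_inverse)
  qed
  moreover have "(\<lambda>m. z^2 * (z ^ m /\<^sub>R fact m)) sums (z^2 * exp z)"
    by (intro sums_mult exp_converges)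
  ultimately have "(\<lambda>m. ?f (Suc (Suc m))) sums (z^2 * exp z)"
    by simp
  then have "?f sums (z^2 * exp z + ?f 1 + ?f 0)"
    by (subst (asm) sums_Suc_iff, subst (asm) sums_Suc_iff) simp
  then show ?thesis
    by simp
qed

definition hankel_poly :: "nat \<Rightarrow> real \<Rightarrow> complex" where
  "hankel_poly n x = (\<Sum>m\<le>n. (- 2 * \<i> * of_real x) ^ m / fact m * of_real (hankel_weight n m))"

lemma hankel_poly_asymp:
  "(\<lambda>n. of_nat n * (hankel_poly n x - exp (- \<i> * of_real x)))
     \<longlonglongrightarrow> of_real (x^2 / 4) * exp (- \<i> * of_real x)"
proof -
  define c :: "nat \<Rightarrow> complex" where "c m = (- 2 * \<i> * of_real x) ^ m / fact m" for m
  define a where "a m n = c m * of_real (real n * (hankel_weight n m - 1 / 2^m))" for m n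
  define b where "b m = c m * of_real (- (real m * (real m - 1) / (4 * 2^m)))" for m
  define M where "M m = (4 * \<bar>x\<bar>) ^ m / fact m" for m
  have c_pow: "c m = 2^m * (- \<i> * of_real x) ^ m / fact m" for m
  proof -
    have "- 2 * \<i> * of_real x = 2 * (- \<i> * of_real x)"
      by simp
    then show ?thesis
      unfolding c_def by (simp only: power_mult_distrib)
  qed
  have c_half: "c m * of_real (1 / 2^m) = (- \<i> * of_real x) ^ m /\<^sub>R fact m" for m
    by (simp add: c_pow scaleR_conv_of_real field_simps)
  have "(\<lambda>n. a m n) \<longlonglongrightarrow> b m" for m
    unfolding a_def b_def by (intro tendsto_intros hankel_weight_asymp)
  moreover have "norm (a m n) \<le> M m" for m n
  proof -
    have "norm (c m) = (2 * \<bar>x\<bar>) ^ m / fact m"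
      by (simp add: c_def norm_divide norm_power norm_mult)
    then have "norm (a m n) = (2 * \<bar>x\<bar>) ^ m / fact m * \<bar>real n * (hankel_weight n m - 1 / 2^m)\<bar>"
      unfolding a_def norm_mult norm_of_real by simp
    also have "\<dots> \<le> (2 * \<bar>x\<bar>) ^ m / fact m * (real m ^ 2 / 2^m)"
      by (intro mult_left_mono hankel_weight_error_bound) auto
    also have "\<dots> = \<bar>x\<bar> ^ m / fact m * real m ^ 2"
      by (simp add: power_mult_distrib)
    also have "\<dots> \<le> \<bar>x\<bar> ^ m / fact m * 4 ^ m"
      by (intro mult_left_mono square_le_four_pow) auto
    finally show ?thesis
      by (simp add: M_def power_mult_distrib mult.commute)
  qed
  moreover have "summable M"
    using summable_exp[of "4 * \<bar>x\<bar>"] by (simp add: M_def[abs_def] divide_inverse mult.commute)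
  ultimately have tannery: "(\<lambda>n. \<Sum>m. a m n) \<longlonglongrightarrow> (\<Sum>m. b m)"
    using tannerys_theorem[of a b sequentially M] by (auto simp: eventually_prod_sequentially)
  have a_sums: "(\<lambda>m. a m n) sums (of_nat n * (hankel_poly n x - exp (- \<i> * of_real x)))" for n
  proof -
    have "(\<lambda>m. c m * of_real (hankel_weight n m)) sums hankel_poly n x"
      unfolding hankel_poly_def c_def by (rule sums_finite) (auto simp: hankel_weight_def)
    moreover have "(\<lambda>m. c m * of_real (1 / 2^m)) sums exp (- \<i> * of_real x)"
      unfolding c_half by (rule exp_converges)
    ultimately have "(\<lambda>m. of_nat n * (c m * of_real (hankel_weight n m) - c m * of_real (1 / 2^m)))
        sums (of_nat n * (hankel_poly n x - exp (- \<i> * of_real x)))"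
      by (intro sums_mult sums_diff)
    then show ?thesis
      by (simp add: a_def algebra_simps)
  qed
  have b_sums: "b sums (of_real (x^2 / 4) * exp (- \<i> * of_real x))"
  proof -
    have b_eq: "b = (\<lambda>m. (- 1/4) * (of_nat m * (of_nat m - 1) * (- \<i> * of_real x) ^ m / fact m))"
      by (rule ext) (simp add: b_def c_pow field_simps)
    have b_sum: "(- 1/4) * ((- \<i> * of_real x)^2 * exp (- \<i> * of_real x))
        = of_real (x^2 / 4) * exp (- \<i> * of_real x)"
      by (simp add: power2_eq_square field_simps)
    show ?thesis
      unfolding b_eq b_sum[symmetric] by (intro sums_mult sums_pred_mult_exp)
  qed
  show ?thesis
    using tannery unfolding sums_unique[OF a_sums, symmetric] sums_unique[OF b_sums, symmetric] .
qed

definition hankel_reduced :: "nat \<Rightarrow> real \<Rightarrow> complex" where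
  "hankel_reduced n x = exp (\<i> * of_real x) * hankel_poly n x"

lemma hankel_reduced_asymp:
  "(\<lambda>n. of_nat n * (hankel_reduced n x - 1)) \<longlonglongrightarrow> of_real (x^2 / 4)"
proof -
  let ?e = "exp (\<i> * of_real x)" and ?e' = "exp (- \<i> * of_real x)"
  have inv: "?e * ?e' = 1"
    by (simp flip: exp_add)
  have lim: "(\<lambda>n. ?e * (of_nat n * (hankel_poly n x - ?e'))) \<longlonglongrightarrow> ?e * (of_real (x^2 / 4) * ?e')"
    by (intro tendsto_intros hankel_poly_asymp)
  have pointwise: "?e * (of_nat n * (hankel_poly n x - ?e')) = of_nat n * (hankel_reduced n x - 1)" for n
    unfolding hankel_reduced_def inv[symmetric] by (simp only: algebra_simps)
  have limit: "?e * (of_real (x^2 / 4) * ?e') = of_real (x^2 / 4)"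
    unfolding mult.left_commute[of ?e] inv by simp
  show ?thesis
    using lim by (simp only: pointwise limit)
qed

lemma hankel_reduced_tendsto_1: "(\<lambda>n. hankel_reduced n x) \<longlonglongrightarrow> 1"
proof -
  have "(\<lambda>n. of_nat n * (hankel_reduced n x - 1) * inverse (of_nat n) + 1) \<longlonglongrightarrow> of_real (x^2 / 4) * 0 + 1"
    by (intro tendsto_intros hankel_reduced_asymp lim_inverse_n)
  then have "(\<lambda>n. of_nat n * (hankel_reduced n x - 1) * inverse (of_nat n) + 1) \<longlonglongrightarrow> 1"
    by simp
  then show ?thesis
  proof (rule Lim_transform_eventually)
    show "\<forall>\<^sub>F n in sequentially. of_nat n * (hankel_reduced n x - 1) * inverse (of_nat n) + 1 = hankel_reduced n x"
      using eventually_gt_at_top[of 0] by eventually_elim (auto simp: field_simps)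
  qed
qed

lemma hankel_reduced_ratio_asymp:
  "(\<lambda>n. of_nat n * (hankel_reduced n a / hankel_reduced n b - 1)) \<longlonglongrightarrow> of_real ((a^2 - b^2) / 4)"
proof -
  have "(\<lambda>n. (of_nat n * (hankel_reduced n a - 1) - of_nat n * (hankel_reduced n b - 1)) / hankel_reduced n b)
      \<longlonglongrightarrow> (of_real (a^2 / 4) - of_real (b^2 / 4)) / 1"
    by (intro tendsto_intros hankel_reduced_asymp hankel_reduced_tendsto_1) simp
  then have "(\<lambda>n. (of_nat n * (hankel_reduced n a - 1) - of_nat n * (hankel_reduced n b - 1)) / hankel_reduced n b)
      \<longlonglongrightarrow> of_real ((a^2 - b^2) / 4)"
    by (simp add: diff_divide_distrib)
  then show ?thesis
  proof (rule Lim_transform_eventually)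
    show "\<forall>\<^sub>F n in sequentially.
        (of_nat n * (hankel_reduced n a - 1) - of_nat n * (hankel_reduced n b - 1)) / hankel_reduced n b
        = of_nat n * (hankel_reduced n a / hankel_reduced n b - 1)"
      using tendsto_imp_eventually_ne[OF hankel_reduced_tendsto_1[of b] one_neq_zero]
      by eventually_elim (simp add: field_simps)
  qed
qed

lemma sph_hankel1_term_reversed:
  fixes x :: real
  assumes "x > 0" and "m \<le> n"
  shows "\<i> ^ (n - m) * of_nat (fact (n + (n - m))) /
           (of_nat (fact (n - m) * fact (n - (n - m))) * (2 * complex_of_real x) ^ (n - m))
         = \<i> ^ n * fact (2*n) / (fact n * (2 * complex_of_real x) ^ n) *
           ((- 2 * \<i> * of_real x) ^ m / fact m * of_real (hankel_weight n m))"
proof -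
  obtain k where n: "n = k + m"
    using assms(2) le_iff_add by (metis add.commute)
  then have idx: "n - m = k" "n + (n - m) = 2*k + m" "n - (n - m) = m" "2*n - m = 2*k + m"
    by auto
  define y where "y = 2 * complex_of_real x"
  have "y \<noteq> 0"
    using assms(1) by (simp add: y_def)
  have neg_i_y: "- 2 * \<i> * of_real x = (- \<i>) * y"
    by (simp add: y_def)
  have "\<i> ^ n * (- 2 * \<i> * of_real x) ^ m = \<i> ^ k * ((\<i> * (- \<i>)) ^ m * y ^ m)"
    unfolding neg_i_y n power_add power_mult_distrib by (simp only: mult_ac)
  then have pow: "\<i> ^ n * (- 2 * \<i> * of_real x) ^ m = \<i> ^ k * y ^ m"
    by simp
  have yn: "y ^ n = y ^ k * y ^ m"
    unfolding n by (simp add: power_add)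
  have weight: "hankel_weight n m = fact (2*k + m) * fact n / (fact k * fact (2*n))"
    using assms(2) unfolding hankel_weight_def idx(1,4) by simp
  have "\<i> ^ n * fact (2*n) / (fact n * y ^ n) * ((- 2 * \<i> * of_real x) ^ m / fact m * of_real (hankel_weight n m))
      = (\<i> ^ n * (- 2 * \<i> * of_real x) ^ m) * fact (2*k + m) / (y ^ n * fact m * fact k)"
    unfolding weight by (simp add: field_simps)
  also have "\<dots> = \<i> ^ k * fact (2*k + m) / (fact k * fact m * y ^ k)"
    unfolding pow yn using \<open>y \<noteq> 0\<close> by (simp add: field_simps)
  finally show ?thesis
    unfolding y_def[symmetric] idx(2,3) unfolding idx(1) by simp
qed

lemma sph_hankel1_eq_reduced:
  assumes "x > 0"
  shows "sph_hankel1 n x = - \<i> * fact (2*n) / (fact n * 2 ^ n) * hankel_reduced n x / complex_of_real x ^ (n + 1)"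
proof -
  have "(\<Sum>k=0..n. \<i> ^ k * of_nat (fact (n + k)) / (of_nat (fact k * fact (n - k)) * (2 * complex_of_real x) ^ k))
      = (\<Sum>m\<le>n. \<i> ^ (n - m) * of_nat (fact (n + (n - m))) /
           (of_nat (fact (n - m) * fact (n - (n - m))) * (2 * complex_of_real x) ^ (n - m)))"
    by (subst sum.atLeastAtMost_rev) (simp add: atLeast0AtMost)
  also have "\<dots> = \<i> ^ n * fact (2*n) / (fact n * (2 * complex_of_real x) ^ n) * hankel_poly n x"
    unfolding hankel_poly_def sum_distrib_left using assms
    by (intro sum.cong refl sph_hankel1_term_reversed) auto
  finally have sum_eq: "(\<Sum>k=0..n. \<i> ^ k * of_nat (fact (n + k)) /
      (of_nat (fact k * fact (n - k)) * (2 * complex_of_real x) ^ k))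
      = \<i> ^ n * fact (2*n) / (fact n * (2 * complex_of_real x) ^ n) * hankel_poly n x" .
  have "sph_hankel1 n x = (- \<i>) ^ (n + 1) * \<i> ^ n * fact (2*n) / (fact n * 2 ^ n) *
      hankel_reduced n x / complex_of_real x ^ (n + 1)"
    unfolding sph_hankel1_def sum_eq hankel_reduced_def using assms by (simp add: field_simps power_mult_distrib)
  moreover have "(- \<i>) ^ (n + 1) * \<i> ^ n = - \<i> * (- \<i> * \<i>) ^ n"
    by (simp only: power_add power_one_right power_mult_distrib mult_ac)
  ultimately show ?thesis
    by simp
qed

lemma sph_hankel1_ratio:
  assumes "a > 0" and "b > 0"
  shows "sph_hankel1 n a / sph_hankel1 n b = of_real ((b / a) ^ (n + 1)) * (hankel_reduced n a / hankel_reduced n b)"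
proof -
  define K :: complex where "K = - \<i> * fact (2*n) / (fact n * 2 ^ n)"
  have "K \<noteq> 0"
    by (simp add: K_def)
  have "sph_hankel1 n a / sph_hankel1 n b
      = K * hankel_reduced n a / complex_of_real a ^ (n + 1) / (K * hankel_reduced n b / complex_of_real b ^ (n + 1))"
    unfolding sph_hankel1_eq_reduced[OF assms(1)] sph_hankel1_eq_reduced[OF assms(2)] K_def ..
  also have "\<dots> = of_real ((b / a) ^ (n + 1)) * (hankel_reduced n a / hankel_reduced n b)"
    using \<open>K \<noteq> 0\<close> assms
    by (cases "hankel_reduced n b = 0") (simp_all add: field_simps power_divide)
  finally show ?thesis .
qed

lemma sph_hankel1_ratio_diff_asymp:
  assumes "k > 0" and "k' > 0" and "r > 0" and "r' > 0"
  shows "(\<lambda>n. of_nat n * (sph_hankel1 n (k * r) / sph_hankel1 n (k * r')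
                         - sph_hankel1 n (k' * r) / sph_hankel1 n (k' * r')) / of_real ((r' / r) ^ (n + 1)))
         \<longlonglongrightarrow> of_real ((k^2 - k'^2) * (r^2 - r'^2) / 4)"
proof -
  let ?Q = "\<lambda>k n. hankel_reduced n (k * r) / hankel_reduced n (k * r')"
  have lim: "(\<lambda>n. of_nat n * (?Q k n - 1) - of_nat n * (?Q k' n - 1))
      \<longlonglongrightarrow> of_real (((k * r)^2 - (k * r')^2) / 4) - of_real (((k' * r)^2 - (k' * r')^2) / 4)"
    by (intro tendsto_intros hankel_reduced_ratio_asymp)
  have ratio: "sph_hankel1 n (\<kappa> * r) / sph_hankel1 n (\<kappa> * r') = of_real ((r' / r) ^ (n + 1)) * ?Q \<kappa> n"
    if "\<kappa> > 0" for \<kappa> n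
    using sph_hankel1_ratio[of "\<kappa> * r" "\<kappa> * r'" n] that assms by simp
  have cancel: "of_nat n * (c * X - c * Y) / c = of_nat n * (X - 1) - of_nat n * (Y - 1)"
    if "c \<noteq> 0" for n and c X Y :: complex
    using that by (simp add: field_simps)
  have pointwise: "of_nat n * (sph_hankel1 n (k * r) / sph_hankel1 n (k * r')
                         - sph_hankel1 n (k' * r) / sph_hankel1 n (k' * r')) / of_real ((r' / r) ^ (n + 1))
      = of_nat n * (?Q k n - 1) - of_nat n * (?Q k' n - 1)" for n
    unfolding ratio[OF assms(1)] ratio[OF assms(2)] using assms by (intro cancel) simp
  have limit: "of_real (((k * r)^2 - (k * r')^2) / 4) - of_real (((k' * r)^2 - (k' * r')^2) / 4)
      = (of_real ((k^2 - k'^2) * (r^2 - r'^2) / 4) :: complex)"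
    by (simp add: power_mult_distrib algebra_simps flip: of_real_diff)
  show ?thesis
    using lim by (simp only: pointwise limit)
qed

lemma eventually_norm_le_of_scaled_tendsto:
  fixes U :: "nat \<Rightarrow> complex" and s :: "nat \<Rightarrow> real"
  assumes "(\<lambda>n. of_nat n * U n / of_real (s n)) \<longlonglongrightarrow> l" and "norm l < B" and "\<And>n. s n > 0"
  shows "\<forall>\<^sub>F n in sequentially. norm (U n) \<le> B * s n / real n"
  using order_tendstoD(2)[OF tendsto_norm[OF assms(1)] assms(2)] eventually_gt_at_top[of 0]
proof eventually_elim
  case (elim n)
  have "norm (U n) = s n / real n * norm (of_nat n * U n / of_real (s n))"
    using elim(2) assms(3)[of n] by (simp add: norm_mult norm_divide)
  also have "\<dots> \<le> s n / real n * B"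
    using elim assms(3)[of n] by (intro mult_left_mono) auto
  finally show ?case
    by (simp add: mult.commute)
qed

lemma norm_sph_hankel_ratio_diff:
  assumes "j \<in> {1, 2}"
  shows "norm (sph_hankel j n a / sph_hankel j n b - sph_hankel j n c / sph_hankel j n d)
       = norm (sph_hankel1 n a / sph_hankel1 n b - sph_hankel1 n c / sph_hankel1 n d)"
proof -
  have "sph_hankel j n a / sph_hankel j n b - sph_hankel j n c / sph_hankel j n d
      \<in> {sph_hankel1 n a / sph_hankel1 n b - sph_hankel1 n c / sph_hankel1 n d,
         cnj (sph_hankel1 n a / sph_hankel1 n b - sph_hankel1 n c / sph_hankel1 n d)}"
    using assms by (auto simp: sph_hankel_def sph_hankel2_def)
  then show ?thesis
    by (auto simp only: complex_mod_cnj insert_iff empty_iff)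
qed

lemma ratio_diff_limit_bound:
  fixes kp ks R R' :: real
  assumes "0 < kp" and "kp < ks" and "0 < R'" and "R' < R"
  shows "\<bar>(kp^2 - ks^2) * (R^2 - R'^2) / 4\<bar> < ks * (ks - kp) * R * (R - R')"
proof -
  define X where "X = (ks - kp) * (R - R')"
  define Y where "Y = (ks + kp) * (R + R')"
  have "X > 0" and "Y > 0"
    using assms by (simp_all add: X_def Y_def)
  have "(kp^2 - ks^2) * (R^2 - R'^2) = - (X * Y)"
    by (simp add: X_def Y_def power2_eq_square algebra_simps)
  then have "(kp^2 - ks^2) * (R^2 - R'^2) / 4 = - (X * Y / 4)"
    by simp
  also have "\<bar>- (X * Y / 4)\<bar> = X * Y / 4"
    using \<open>X > 0\<close> \<open>Y > 0\<close> by simp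
  also have "\<dots> < X * ((2 * ks) * (2 * R)) / 4"
  proof -
    have "Y < (2 * ks) * (2 * R)"
      unfolding Y_def using assms by (intro mult_strict_mono) auto
    with \<open>X > 0\<close> show ?thesis
      by simp
  qed
  also have "\<dots> = ks * (ks - kp) * R * (R - R')"
    by (simp add: X_def)
  finally show ?thesis .
qed

theorem lemmaE5:
  fixes kp ks R R' :: real
  assumes "0 < kp" and "kp < ks" and "0 < R'" and "R' < R"
  shows "\<forall>j\<in>{1, 2::nat}. \<forall>\<^sub>F n in sequentially.
           norm (sph_hankel j n (kp * R) / sph_hankel j n (kp * R')
                 - sph_hankel j n (ks * R) / sph_hankel j n (ks * R'))
           \<le> 14 / 3 * (ks * (ks - kp) / real n) * R * (R - R') * (R' / R) ^ (n + 1)"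
proof
  fix j :: nat
  assume j: "j \<in> {1, 2}"
  define B where "B = 14 / 3 * (ks * (ks - kp) * R * (R - R'))"
  have lim: "(\<lambda>n. of_nat n * (sph_hankel1 n (kp * R) / sph_hankel1 n (kp * R')
                               - sph_hankel1 n (ks * R) / sph_hankel1 n (ks * R')) / of_real ((R' / R) ^ (n + 1)))
      \<longlonglongrightarrow> of_real ((kp^2 - ks^2) * (R^2 - R'^2) / 4)"
    using assms by (intro sph_hankel1_ratio_diff_asymp) auto
  have "norm (of_real ((kp^2 - ks^2) * (R^2 - R'^2) / 4) :: complex) < B"
    unfolding norm_of_real B_def using ratio_diff_limit_bound[OF assms] assms by simp
  then have "\<forall>\<^sub>F n in sequentially.
      norm (sph_hankel1 n (kp * R) / sph_hankel1 n (kp * R') - sph_hankel1 n (ks * R) / sph_hankel1 n (ks * R'))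
      \<le> B * (R' / R) ^ (n + 1) / real n"
    using assms by (intro eventually_norm_le_of_scaled_tendsto[OF lim]) auto
  then show "\<forall>\<^sub>F n in sequentially.
      norm (sph_hankel j n (kp * R) / sph_hankel j n (kp * R') - sph_hankel j n (ks * R) / sph_hankel j n (ks * R'))
      \<le> 14 / 3 * (ks * (ks - kp) / real n) * R * (R - R') * (R' / R) ^ (n + 1)"
    unfolding norm_sph_hankel_ratio_diff[OF j] by (simp add: B_def field_simps)
qed

end
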